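(* Let $\rho\colon\mathcal{F}\to[\Lambda]^\omega$ with $\mathcal{F}\subseteq[\Omega]^\omega$ be a partition regular function. (1) If $\rho\in(S_2)$, then $\rho\in(S_1)$. (2) For every ideal $\mathcal{I}$ on a countably infinite set $\Lambda$, the function $\rho_{\mathcal{I}}$ belongs to $(S_2)$. (3) If $\rho\in P^-$ and $\rho$ has small accretions, then $\rho\in(S_2)$.
   Context: An ideal on a nonempty set $X$ is a family $\mathcal{I}\subseteq\mathcal{P}(X)$ with $\emptyset\in\mathcal{I}$, $X\notin\mathcal{I}$, closed under finite unions and subsets, and containing all finite subsets of $X$; $\mathcal{I}^+=\mathcal{P}(X)\setminus\mathcal{I}$. $[A]^\omega$ denotes the countably infinite subsets of $A$, $[A]^{<\omega}$ the finite subsets. Partition regular function: $\Lambda,\Omega$ are countably infinite sets, $\mathcal{F}$ is a nonempty family of infinite subsets of $\Omega$ with $F\setminus K\in\mathcal{F}$ for all $F\in\mathcal{F}$ and finite $K\subseteq\Omega$. A function $\rho\colon\mathcal{F}\to[\Lambda]^\omega$ is partition regular if (M) $E\subseteq F$ implies $\rho(E)\subseteq\rho(F)$ for $E,F\in\mathcal{F}$; (R) whenever $F\in\mathcal{F}$ and $\rho(F)=A\cup B$ with $A,B\subseteq\Lambda$, there is $E\in\mathcal{F}$ with $\rho(E)\subseteq A$ or $\rho(E)\subseteq B$; (S) for every $E\in\mathcal{F}$ there is $F\in\mathcal{F}$ with $F\subseteq E$ such that for every $a\in\rho(F)$ there is a finite $K\subseteq\Omega$ with $a\notin\rho(F\setminus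 K)$. Put $\mathcal{I}_\rho=\{A\subseteq\Lambda:\forall F\in\mathcal{F}\ \rho(F)\not\subseteq A\}$ (an ideal on $\Lambda$). For an ideal $\mathcal{I}$ on $\Lambda$, $\rho_{\mathcal{I}}\colon\mathcal{I}^+\to[\Lambda]^\omega$ is $\rho_{\mathcal{I}}(A)=A$ (here $\Omega=\Lambda$, $\mathcal{F}=\mathcal{I}^+$). $\rho$ has small accretions if for every $E\in\mathcal{F}$ there is $F\in\mathcal{F}$ with $F\subseteq E$ such that $\rho(F)\setminus\rho(F\setminus K)\in\mathcal{I}_\rho$ for every finite $K\subseteq\Omega$. $\rho\in P^-$ means: for every decreasing sequence $A_0\supseteq A_1\supseteq\dots$ of subsets of $\Lambda$ with $A_0\notin\mathcal{I}_\rho$ and $A_n\setminus A_{n+1}\in\mathcal{I}_\rho$ for all $n$, there is $F\in\mathcal{F}$ with $\rho(F)\subseteq A_0$ such that for each $n$ there is a finite $K\subseteq\Omega$ with $\rho(F\setminus K)\subseteq A_n$. $\rho\in(S_1)$ means: for every $E\in\mathcal{F}$ there is $F\in\mathcal{F}$, $F\subseteq E$, such that for every $A\in\mathcal{I}_\rho$ there is $G\in\mathcal{F}$ with $\rho(G)\subseteq\rho(F)\setminus A$ and for every finite $K\subseteq\Omega$ there is a finite $L\subseteq\Omega$ with $\rho(G\setminus L)\subseteq\rho(F\setminus K)$. $\rho\in(S_2)$ means: for every $E\in\mathcal{F}$ there is $F\in\mathcal{F}$, $F\subseteq E$, such that for every $B\subseteq\rho(F)$ with $B\notin\mathcal{I}_\rho$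 there is $G\in\mathcal{F}$ with $\rho(G)\subseteq B$ and for every finite $K\subseteq\Omega$ there is a finite $L\subseteq\Omega$ with $\rho(G\setminus L)\subseteq\rho(F\setminus K)$. *)

theory Defs
  imports Main "HOL-Library.Countable_Set"
begin

text \<open>The sets Lambda and Omega are modelled as (countably infinite) types
'l and 'o.  [Lambda]^omega is the set of infinite subsets of 'l (countability
is automatic since 'l is countable).\<close>

definition is_ideal :: "'a set set \<Rightarrow> bool" where
  "is_ideal I \<longleftrightarrow> {} \<in> I \<and> UNIV \<notin> I
     \<and> (\<forall>A\<in>I. \<forall>B\<in>I. A \<union> B \<in> I)
     \<and> (\<forall>A\<in>I. \<forall>B. B \<subseteq> A \<longrightarrow> B \<in> I)
     \<and> (\<forall>A. finite A \<longrightarrow> A \<in> I)"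

definition partition_regular :: "'o set set \<Rightarrow> ('o set \<Rightarrow> 'l set) \<Rightarrow> bool" where
  "partition_regular \<F> \<rho> \<longleftrightarrow>
     \<F> \<noteq> {} \<and> (\<forall>F\<in>\<F>. infinite F)
     \<and> (\<forall>F\<in>\<F>. \<forall>K. finite K \<longrightarrow> F - K \<in> \<F>)
     \<and> (\<forall>F\<in>\<F>. infinite (\<rho> F))
     \<comment> \<open>(M)\<close>
     \<and> (\<forall>E\<in>\<F>. \<forall>F\<in>\<F>. E \<subseteq> F \<longrightarrow> \<rho> E \<subseteq> \<rho> F)
     \<comment> \<open>(R)\<close>
     \<and> (\<forall>F\<in>\<F>. \<forall>A B. \<rho> F = A \<union> B \<longrightarrow>
           (\<exists>E\<in>\<F>. \<rho> E \<subseteq> A \<or> \<rho> E \<subseteq> B))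
     \<comment> \<open>(S)\<close>
     \<and> (\<forall>E\<in>\<F>. \<exists>F\<in>\<F>. F \<subseteq> E \<and>
           (\<forall>a\<in>\<rho> F. \<exists>K. finite K \<and> a \<notin> \<rho> (F - K)))"

definition I_rho :: "'o set set \<Rightarrow> ('o set \<Rightarrow> 'l set) \<Rightarrow> 'l set set" where
  "I_rho \<F> \<rho> = {A. \<forall>F\<in>\<F>. \<not> \<rho> F \<subseteq> A}"

definition small_accretions :: "'o set set \<Rightarrow> ('o set \<Rightarrow> 'l set) \<Rightarrow> bool" where
  "small_accretions \<F> \<rho> \<longleftrightarrow>
     (\<forall>E\<in>\<F>. \<exists>F\<in>\<F>. F \<subseteq> E \<and>
        (\<forall>K. finite K \<longrightarrow> \<rho> F - \<rho> (F - K) \<in> I_rho \<F> \<rho>))"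

definition P_minus :: "'o set set \<Rightarrow> ('o set \<Rightarrow> 'l set) \<Rightarrow> bool" where
  "P_minus \<F> \<rho> \<longleftrightarrow>
     (\<forall>A :: nat \<Rightarrow> 'l set. (\<forall>n. A (Suc n) \<subseteq> A n) \<and> A 0 \<notin> I_rho \<F> \<rho>
        \<and> (\<forall>n. A n - A (Suc n) \<in> I_rho \<F> \<rho>) \<longrightarrow>
        (\<exists>F\<in>\<F>. \<rho> F \<subseteq> A 0 \<and>
           (\<forall>n. \<exists>K. finite K \<and> \<rho> (F - K) \<subseteq> A n)))"

definition S1 :: "'o set set \<Rightarrow> ('o set \<Rightarrow> 'l set) \<Rightarrow> bool" where
  "S1 \<F> \<rho> \<longleftrightarrow>
     (\<forall>E\<in>\<F>. \<exists>F\<in>\<F>. F \<subseteq> E \<and>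
        (\<forall>A\<in>I_rho \<F> \<rho>. \<exists>G\<in>\<F>. \<rho> G \<subseteq> \<rho> F - A \<and>
           (\<forall>K. finite K \<longrightarrow> (\<exists>L. finite L \<and> \<rho> (G - L) \<subseteq> \<rho> (F - K)))))"

definition S2 :: "'o set set \<Rightarrow> ('o set \<Rightarrow> 'l set) \<Rightarrow> bool" where
  "S2 \<F> \<rho> \<longleftrightarrow>
     (\<forall>E\<in>\<F>. \<exists>F\<in>\<F>. F \<subseteq> E \<and>
        (\<forall>B. B \<subseteq> \<rho> F \<and> B \<notin> I_rho \<F> \<rho> \<longrightarrow>
           (\<exists>G\<in>\<F>. \<rho> G \<subseteq> B \<and>
              (\<forall>K. finite K \<longrightarrow> (\<exists>L. finite L \<and> \<rho> (G - L) \<subseteq> \<rho> (F - K))))))"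

definition rho_ideal :: "'l set set \<Rightarrow> 'l set \<Rightarrow> 'l set" where
  "rho_ideal I = (\<lambda>A. A)"

definition ideal_plus :: "'l set set \<Rightarrow> 'l set set" where
  "ideal_plus I = {A. A \<notin> I}"

end

theory Submission
  imports Defs
begin

text \<open>Parts (1) and (2) are bookkeeping once one knows that \<open>I_rho\<close> is closed under
finite unions (this is where (R) enters) and that \<open>I_rho\<close> of \<open>\<rho>\<^sub>\<I>\<close> is \<open>\<I>\<close> itself.
For (3), exhaust \<open>\<Omega>\<close> by finite sets \<open>K\<^sub>0 \<subseteq> K\<^sub>1 \<subseteq> \<dots>\<close> and take \<open>F\<close> with small
accretions. For \<open>B \<subseteq> \<rho> F\<close> outside \<open>I_rho\<close>, the sets \<open>B \<inter> \<rho> (F - K\<^sub>n)\<close> decrease with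
differences inside the small accretions \<open>\<rho> F - \<rho> (F - K\<^sub>n\<^sub>+\<^sub>1)\<close>; so \<open>P\<^sup>-\<close> yields \<open>G\<close>
whose tails lie in them, i.e. in the tails of \<open>F\<close>.\<close>

definition tails_refine :: "('o set \<Rightarrow> 'l set) \<Rightarrow> 'o set \<Rightarrow> 'o set \<Rightarrow> bool" where
  "tails_refine \<rho> G F \<longleftrightarrow> (\<forall>K. finite K \<longrightarrow> (\<exists>L. finite L \<and> \<rho> (G - L) \<subseteq> \<rho> (F - K)))"

lemma S1_iff_tails_refine:
  "S1 \<F> \<rho> \<longleftrightarrow> (\<forall>E\<in>\<F>. \<exists>F\<in>\<F>. F \<subseteq> E \<and>
     (\<forall>A\<in>I_rho \<F> \<rho>. \<exists>G\<in>\<F>. \<rho> G \<subseteq> \<rho> F - A \<and> tails_refine \<rho> G F))"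
  by (simp add: S1_def tails_refine_def)

lemma S2_iff_tails_refine:
  "S2 \<F> \<rho> \<longleftrightarrow> (\<forall>E\<in>\<F>. \<exists>F\<in>\<F>. F \<subseteq> E \<and>
     (\<forall>B. B \<subseteq> \<rho> F \<and> B \<notin> I_rho \<F> \<rho> \<longrightarrow> (\<exists>G\<in>\<F>. \<rho> G \<subseteq> B \<and> tails_refine \<rho> G F)))"
  by (simp add: S2_def tails_refine_def)

lemma partition_regular_diff_finite:
  "partition_regular \<F> \<rho> \<Longrightarrow> F \<in> \<F> \<Longrightarrow> finite K \<Longrightarrow> F - K \<in> \<F>"
  by (simp add: partition_regular_def)

lemma partition_regular_mono:
  "partition_regular \<F> \<rho> \<Longrightarrow> E \<in> \<F> \<Longrightarrow> F \<in> \<F> \<Longrightarrow> E \<subseteq> F \<Longrightarrow> \<rho> E \<subseteq> \<rho> F"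
  by (simp add: partition_regular_def)

lemma partition_regular_split:
  "partition_regular \<F> \<rho> \<Longrightarrow> F \<in> \<F> \<Longrightarrow> \<rho> F = A \<union> B \<Longrightarrow> \<exists>E\<in>\<F>. \<rho> E \<subseteq> A \<or> \<rho> E \<subseteq> B"
  unfolding partition_regular_def by blast

lemma partition_regular_tail_antimono:
  assumes "partition_regular \<F> \<rho>" "F \<in> \<F>" "finite K'" "K \<subseteq> K'"
  shows "\<rho> (F - K') \<subseteq> \<rho> (F - K)"
proof -
  have "finite K"
    using \<open>K \<subseteq> K'\<close> \<open>finite K'\<close> by (rule finite_subset)
  with assms show ?thesis
    by (intro partition_regular_mono[OF assms(1)] partition_regular_diff_finite[OF assms(1,2)]) auto
qed

lemma notin_I_rho_iff: "B \<notin> I_rho \<F> \<rho> \<longleftrightarrow> (\<exists>F\<in>\<F>. \<rho> F \<subseteq> B)"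
  by (auto simp: I_rho_def)

lemma I_rho_subset: "A \<in> I_rho \<F> \<rho> \<Longrightarrow> B \<subseteq> A \<Longrightarrow> B \<in> I_rho \<F> \<rho>"
  by (auto simp: I_rho_def)

lemma I_rho_Un:
  assumes pr: "partition_regular \<F> \<rho>" and "A \<in> I_rho \<F> \<rho>" "B \<in> I_rho \<F> \<rho>"
  shows "A \<union> B \<in> I_rho \<F> \<rho>"
proof (rule ccontr)
  assume "A \<union> B \<notin> I_rho \<F> \<rho>"
  then obtain F where F: "F \<in> \<F>" "\<rho> F \<subseteq> A \<union> B"
    by (auto simp: notin_I_rho_iff)
  then have "\<rho> F = (\<rho> F \<inter> A) \<union> (\<rho> F \<inter> B)"
    by blast
  from partition_regular_split[OF pr F(1) this]
  obtain E where "E \<in> \<F>" "\<rho> E \<subseteq> A \<or> \<rho> E \<subseteq> B"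
    by blast
  with \<open>A \<in> I_rho \<F> \<rho>\<close> \<open>B \<in> I_rho \<F> \<rho>\<close> show False
    by (auto simp: I_rho_def)
qed

lemma image_diff_I_rho_notin_I_rho:
  assumes "partition_regular \<F> \<rho>" "F \<in> \<F>" "A \<in> I_rho \<F> \<rho>"
  shows "\<rho> F - A \<notin> I_rho \<F> \<rho>"
proof
  assume "\<rho> F - A \<in> I_rho \<F> \<rho>"
  then have "(\<rho> F - A) \<union> A \<in> I_rho \<F> \<rho>"
    using assms by (intro I_rho_Un)
  with \<open>F \<in> \<F>\<close> show False
    by (auto simp: I_rho_def)
qed

lemma S2_imp_S1:
  assumes "partition_regular \<F> \<rho>" "S2 \<F> \<rho>"
  shows "S1 \<F> \<rho>"
  unfolding S1_iff_tails_refine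
proof
  fix E assume "E \<in> \<F>"
  then obtain F where F: "F \<in> \<F>" "F \<subseteq> E"
    and witness: "\<And>B. B \<subseteq> \<rho> F \<Longrightarrow> B \<notin> I_rho \<F> \<rho> \<Longrightarrow> \<exists>G\<in>\<F>. \<rho> G \<subseteq> B \<and> tails_refine \<rho> G F"
    using \<open>S2 \<F> \<rho>\<close> unfolding S2_iff_tails_refine by auto
  have "\<exists>G\<in>\<F>. \<rho> G \<subseteq> \<rho> F - A \<and> tails_refine \<rho> G F" if "A \<in> I_rho \<F> \<rho>" for A
    by (rule witness[OF _ image_diff_I_rho_notin_I_rho[OF assms(1) F(1) that]]) blast
  with F show "\<exists>F\<in>\<F>. F \<subseteq> E \<and>
      (\<forall>A\<in>I_rho \<F> \<rho>. \<exists>G\<in>\<F>. \<rho> G \<subseteq> \<rho> F - A \<and> tails_refine \<rho> G F)"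
    by blast
qed

lemma I_rho_ideal_plus:
  assumes "\<And>A B. A \<in> I \<Longrightarrow> B \<subseteq> A \<Longrightarrow> B \<in> I"
  shows "I_rho (ideal_plus I) (rho_ideal I) = I"
  using assms by (auto simp: I_rho_def ideal_plus_def rho_ideal_def)

lemma tails_refine_id: "B \<subseteq> E \<Longrightarrow> tails_refine (\<lambda>A. A) B E"
  unfolding tails_refine_def by blast

lemma S2_ideal_plus:
  assumes "\<And>A B. A \<in> I \<Longrightarrow> B \<subseteq> A \<Longrightarrow> B \<in> I"
  shows "S2 (ideal_plus I) (rho_ideal I)"
proof -
  have "I_rho (ideal_plus I) (rho_ideal I) = I"
    using assms by (rule I_rho_ideal_plus)
  then show ?thesis
    unfolding S2_iff_tails_refine
    by (auto simp: ideal_plus_def rho_ideal_def intro: tails_refine_id)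
qed

lemma countable_finite_exhaustion:
  assumes "countable (UNIV :: 'a set)"
  obtains K :: "nat \<Rightarrow> 'a set"
  where "K 0 = {}" "mono K" "\<And>n. finite (K n)" "\<And>S. finite S \<Longrightarrow> \<exists>n. S \<subseteq> K n"
proof -
  obtain f :: "'a \<Rightarrow> nat" where "inj f"
    using assms by (auto simp: countable_def)
  define K where "K n = f -` {..<n}" for n
  have "K 0 = {}"
    by (simp add: K_def)
  moreover have "mono K"
    by (auto simp: K_def mono_def)
  moreover have "finite (K n)" for n
    using \<open>inj f\<close> by (simp add: K_def finite_vimageI)
  moreover have "\<exists>n. S \<subseteq> K n" if "finite S" for S
  proof -
    obtain n where "f ` S \<subseteq> {..<n}"
      using finite_nat_bounded[OF finite_imageI[OF \<open>finite S\<close>]] by blast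
    then show ?thesis
      by (auto simp: K_def)
  qed
  ultimately show thesis
    by (rule that)
qed

lemma P_minusD:
  assumes "P_minus \<F> \<rho>" "\<And>n. A (Suc n) \<subseteq> A n" "A 0 \<notin> I_rho \<F> \<rho>"
    "\<And>n. A n - A (Suc n) \<in> I_rho \<F> \<rho>"
  obtains G where "G \<in> \<F>" "\<rho> G \<subseteq> A 0" "\<And>n. \<exists>L. finite L \<and> \<rho> (G - L) \<subseteq> A n"
  using assms(1)[unfolded P_minus_def, rule_format, of A] assms(2-4) by blast

lemma P_minus_tail_refinement:
  fixes \<F> :: "'o set set" and \<rho> :: "'o set \<Rightarrow> 'l set"
  assumes "countable (UNIV :: 'o set)" and pr: "partition_regular \<F> \<rho>" and "P_minus \<F> \<rho>"
    and F: "F \<in> \<F>" and small: "\<And>K. finite K \<Longrightarrow> \<rho> F - \<rho> (F - K) \<in> I_rho \<F> \<rho>"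
    and B: "B \<subseteq> \<rho> F" "B \<notin> I_rho \<F> \<rho>"
  shows "\<exists>G\<in>\<F>. \<rho> G \<subseteq> B \<and> tails_refine \<rho> G F"
proof -
  obtain Kn :: "nat \<Rightarrow> 'o set" where Kn: "Kn 0 = {}" "mono Kn" "\<And>n. finite (Kn n)"
    and exhausts: "\<And>S. finite S \<Longrightarrow> \<exists>n. S \<subseteq> Kn n"
    using countable_finite_exhaustion[OF \<open>countable UNIV\<close>] by blast
  define A where "A n = B \<inter> \<rho> (F - Kn n)" for n
  have tail_Suc: "\<rho> (F - Kn (Suc n)) \<subseteq> \<rho> (F - Kn n)" for n
    using Kn by (intro partition_regular_tail_antimono[OF pr F]) (auto dest: monoD[of _ n "Suc n"])
  have A0: "A 0 = B"
    using B(1) by (auto simp: A_def Kn(1))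
  have "A (Suc n) \<subseteq> A n" for n
    using tail_Suc by (auto simp: A_def)
  moreover have "A 0 \<notin> I_rho \<F> \<rho>"
    using B(2) by (simp add: A0)
  moreover have "A n - A (Suc n) \<in> I_rho \<F> \<rho>" for n
    using B(1) by (intro I_rho_subset[OF small[OF Kn(3)]]) (auto simp: A_def)
  ultimately obtain G where G: "G \<in> \<F>" "\<rho> G \<subseteq> A 0"
    and tails: "\<And>n. \<exists>L. finite L \<and> \<rho> (G - L) \<subseteq> A n"
    using P_minusD[OF \<open>P_minus \<F> \<rho>\<close>] by blast
  have "\<exists>L. finite L \<and> \<rho> (G - L) \<subseteq> \<rho> (F - K)" if "finite K" for K
  proof -
    obtain n where "K \<subseteq> Kn n"
      using exhausts[OF \<open>finite K\<close>] by blast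
    then have "\<rho> (F - Kn n) \<subseteq> \<rho> (F - K)"
      by (rule partition_regular_tail_antimono[OF pr F Kn(3)])
    moreover obtain L where "finite L" "\<rho> (G - L) \<subseteq> A n"
      using tails by blast
    ultimately show ?thesis
      by (auto simp: A_def)
  qed
  then have "tails_refine \<rho> G F"
    by (simp add: tails_refine_def)
  moreover have "\<rho> G \<subseteq> B"
    using G(2) A0 by simp
  ultimately show ?thesis
    using G(1) by blast
qed

lemma P_minus_small_accretions_imp_S2:
  fixes \<F> :: "'o set set" and \<rho> :: "'o set \<Rightarrow> 'l set"
  assumes "countable (UNIV :: 'o set)" "partition_regular \<F> \<rho>" "P_minus \<F> \<rho>"
    and "small_accretions \<F> \<rho>"
  shows "S2 \<F> \<rho>"
  unfolding S2_iff_tails_refine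
proof
  fix E assume "E \<in> \<F>"
  then obtain F where F: "F \<in> \<F>" "F \<subseteq> E"
    and small: "\<And>K. finite K \<Longrightarrow> \<rho> F - \<rho> (F - K) \<in> I_rho \<F> \<rho>"
    using \<open>small_accretions \<F> \<rho>\<close> unfolding small_accretions_def by auto
  then show "\<exists>F\<in>\<F>. F \<subseteq> E \<and> (\<forall>B. B \<subseteq> \<rho> F \<and> B \<notin> I_rho \<F> \<rho> \<longrightarrow>
      (\<exists>G\<in>\<F>. \<rho> G \<subseteq> B \<and> tails_refine \<rho> G F))"
    using P_minus_tail_refinement[OF assms(1-3) F(1) small] by auto
qed

theorem proposition2p6:
  fixes \<F> :: "'o set set" and \<rho> :: "'o set \<Rightarrow> 'l set"
  assumes "countable (UNIV :: 'o set)" and "infinite (UNIV :: 'o set)"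
      and "countable (UNIV :: 'l set)" and "infinite (UNIV :: 'l set)"
  shows "(partition_regular \<F> \<rho> \<and> S2 \<F> \<rho> \<longrightarrow> S1 \<F> \<rho>)
       \<and> (\<forall>I :: 'l set set. is_ideal I \<longrightarrow> S2 (ideal_plus I) (rho_ideal I))
       \<and> (partition_regular \<F> \<rho> \<and> P_minus \<F> \<rho> \<and> small_accretions \<F> \<rho>
            \<longrightarrow> S2 \<F> \<rho>)"
proof (intro conjI allI impI)
  show "S1 \<F> \<rho>" if "partition_regular \<F> \<rho> \<and> S2 \<F> \<rho>"
    using that S2_imp_S1 by blast
  show "S2 (ideal_plus I) (rho_ideal I)" if "is_ideal I" for I :: "'l set set"
    using that by (intro S2_ideal_plus) (auto simp: is_ideal_def)
  show "S2 \<F> \<rho>" if "partition_regular \<F> \<rho> \<and> P_minus \<F> \<rho> \<and> small_accretions \<F> \<rho>"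
    using that P_minus_small_accretions_imp_S2[OF assms(1)] by blast
qed

end
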